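(* Let $R$ be a commutative ring with identity, $M$ an $R$-module and $a\in R$. Then $a\Gamma_{a}\big(M/a\Gamma_{a}(M)\big)=0$.
   Context: For an $R$-module $N$ and $a\in R$: $\Gamma_{a}(N)=\{n\in N \mid a^{k}n=0 \text{ for some } k\in\mathbb{Z}^{+}\}$ and $a\Gamma_{a}(N)=\{an \mid n\in \Gamma_a(N)\}$. *)

theory Defs
  imports "HOL-Algebra.Algebra"
begin

definition Gamma :: "('a, 'c) ring_scheme \<Rightarrow> ('a, 'b, 'd) module_scheme \<Rightarrow> 'a \<Rightarrow> 'b set" where
  "Gamma R N a = {n \<in> carrier N. \<exists>k::nat. k > 0 \<and> (a [^]\<^bsub>R\<^esub> k) \<odot>\<^bsub>N\<^esub> n = \<zero>\<^bsub>N\<^esub>}"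

definition aGamma :: "('a, 'c) ring_scheme \<Rightarrow> ('a, 'b, 'd) module_scheme \<Rightarrow> 'a \<Rightarrow> 'b set" where
  "aGamma R N a = (\<lambda>n. a \<odot>\<^bsub>N\<^esub> n) ` Gamma R N a"

text \<open>Quotient module M/N, with elements the additive cosets of N in M.
  The ring multiplication field is irrelevant for modules and is set trivially.\<close>
definition quot_module :: "('a, 'c) ring_scheme \<Rightarrow> ('a, 'b, 'd) module_scheme \<Rightarrow> 'b set \<Rightarrow> ('a, 'b set) module" where
  "quot_module R M N =
    \<lparr> carrier = a_rcosets\<^bsub>M\<^esub> N,
      monoid.mult = (\<lambda>_ _. N),
      one = N,
      ring.zero = N,
      ring.add = set_add M,
      module.smult = (\<lambda>r S. \<Union>x\<in>S. a_r_coset M N (smult M r x)) \<rparr>"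

end

theory Submission
  imports Defs
begin

text \<open>Write \<open>N = a\<Gamma>\<^sub>a(M)\<close>, a submodule because \<open>R\<close> is commutative. If \<open>a\<^sup>k\<close> kills the
  class of \<open>x\<close> in \<open>M/N\<close>, then \<open>a\<^sup>k x = a y\<close> with \<open>a\<^sup>m y = 0\<close>, so
  \<open>a\<^sup>m\<^sup>+\<^sup>k x = a (a\<^sup>m y) = 0\<close>. Thus \<open>x \<in> \<Gamma>\<^sub>a(M)\<close>, so \<open>a x \<in> N\<close> and \<open>a\<close> kills the class of \<open>x\<close>.\<close>

lemma quot_module_carrier [simp]: "carrier (quot_module R M N) = a_rcosets\<^bsub>M\<^esub> N"
  by (simp add: quot_module_def)

lemma quot_module_zero [simp]: "\<zero>\<^bsub>quot_module R M N\<^esub> = N"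
  by (simp add: quot_module_def)

context module
begin

lemma smult_smult_comm:
  assumes "r \<in> carrier R" "s \<in> carrier R" "x \<in> carrier M"
  shows "r \<odot>\<^bsub>M\<^esub> (s \<odot>\<^bsub>M\<^esub> x) = s \<odot>\<^bsub>M\<^esub> (r \<odot>\<^bsub>M\<^esub> x)"
  using assms by (simp add: smult_assoc1[symmetric] R.m_comm)

lemma pow_smult_zero_mono:
  fixes k n :: nat
  assumes "a \<in> carrier R" "x \<in> carrier M" "(a [^] k) \<odot>\<^bsub>M\<^esub> x = \<zero>\<^bsub>M\<^esub>" "k \<le> n"
  shows "(a [^] n) \<odot>\<^bsub>M\<^esub> x = \<zero>\<^bsub>M\<^esub>"
proof -
  have "a [^] n = a [^] (n - k) \<otimes> a [^] k"
    using assms by (simp add: R.nat_pow_mult)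
  then show ?thesis
    using assms by (simp add: smult_assoc1)
qed

lemma submodule_zero_closed: "submodule H R M \<Longrightarrow> \<zero>\<^bsub>M\<^esub> \<in> H"
  using additive_subgroup.zero_closed[OF additive_subgroupI[OF submodule.axioms(1)]] .

lemma submodule_abelian_subgroup: "submodule H R M \<Longrightarrow> abelian_subgroup H M"
  by (intro abelian_subgroupI3 additive_subgroupI submodule.axioms(1) abelian_group_axioms)

lemma submodule_rcos_zero: "submodule N R M \<Longrightarrow> N +>\<^bsub>M\<^esub> \<zero>\<^bsub>M\<^esub> = N"
  by (rule abelian_subgroup.a_rcos_const[OF submodule_abelian_subgroup submodule_zero_closed])

lemma Gamma_submodule:
  assumes a: "a \<in> carrier R"
  shows "submodule (Gamma R M a) R M"
proof (rule submoduleI)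
  show "Gamma R M a \<subseteq> carrier M"
    unfolding Gamma_def by blast
  show "\<zero>\<^bsub>M\<^esub> \<in> Gamma R M a"
    using a unfolding Gamma_def by (auto intro!: exI[of _ 1])
  show "\<ominus>\<^bsub>M\<^esub> x \<in> Gamma R M a" if "x \<in> Gamma R M a" for x
    using that a unfolding Gamma_def by (auto simp: smult_r_minus)
  show "r \<odot>\<^bsub>M\<^esub> x \<in> Gamma R M a" if "r \<in> carrier R" "x \<in> Gamma R M a" for r x
    using that a unfolding Gamma_def by (auto simp: smult_smult_comm)
  show "x \<oplus>\<^bsub>M\<^esub> y \<in> Gamma R M a" if x: "x \<in> Gamma R M a" and y: "y \<in> Gamma R M a" for x y
  proof -
    obtain k :: nat where k: "x \<in> carrier M" "k > 0" "(a [^] k) \<odot>\<^bsub>M\<^esub> x = \<zero>\<^bsub>M\<^esub>"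
      using x unfolding Gamma_def by blast
    obtain m :: nat where m: "y \<in> carrier M" "(a [^] m) \<odot>\<^bsub>M\<^esub> y = \<zero>\<^bsub>M\<^esub>"
      using y unfolding Gamma_def by blast
    have "(a [^] (k + m)) \<odot>\<^bsub>M\<^esub> (x \<oplus>\<^bsub>M\<^esub> y) = \<zero>\<^bsub>M\<^esub>"
      using a k m by (simp add: smult_r_distr pow_smult_zero_mono)
    with k m show ?thesis
      unfolding Gamma_def by (auto intro!: exI[of _ "k + m"])
  qed
qed

lemma smult_image_submodule:
  assumes H: "submodule H R M" and c: "c \<in> carrier R"
  shows "submodule ((\<lambda>x. c \<odot>\<^bsub>M\<^esub> x) ` H) R M"
proof (rule submoduleI)
  note H_props = submoduleE[OF H]
  show "(\<lambda>x. c \<odot>\<^bsub>M\<^esub> x) ` H \<subseteq> carrier M"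
    using H_props(1) c by auto
  show "\<zero>\<^bsub>M\<^esub> \<in> (\<lambda>x. c \<odot>\<^bsub>M\<^esub> x) ` H"
    using c submodule_zero_closed[OF H] by (force intro: image_eqI[of _ _ "\<zero>\<^bsub>M\<^esub>"])
  show "\<ominus>\<^bsub>M\<^esub> y \<in> (\<lambda>x. c \<odot>\<^bsub>M\<^esub> x) ` H" if y: "y \<in> (\<lambda>x. c \<odot>\<^bsub>M\<^esub> x) ` H" for y
  proof -
    obtain u where "u \<in> H" "y = c \<odot>\<^bsub>M\<^esub> u"
      using y by blast
    moreover have "\<ominus>\<^bsub>M\<^esub> y = c \<odot>\<^bsub>M\<^esub> (\<ominus>\<^bsub>M\<^esub> u)"
      using calculation H_props(1) c by (simp add: smult_r_minus subsetD)
    ultimately show ?thesis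
      using H_props(3) by blast
  qed
  show "y \<oplus>\<^bsub>M\<^esub> z \<in> (\<lambda>x. c \<odot>\<^bsub>M\<^esub> x) ` H"
    if y: "y \<in> (\<lambda>x. c \<odot>\<^bsub>M\<^esub> x) ` H" and z: "z \<in> (\<lambda>x. c \<odot>\<^bsub>M\<^esub> x) ` H" for y z
  proof -
    obtain u v where "u \<in> H" "v \<in> H" "y = c \<odot>\<^bsub>M\<^esub> u" "z = c \<odot>\<^bsub>M\<^esub> v"
      using y z by blast
    moreover have "y \<oplus>\<^bsub>M\<^esub> z = c \<odot>\<^bsub>M\<^esub> (u \<oplus>\<^bsub>M\<^esub> v)"
      using calculation H_props(1) c by (simp add: smult_r_distr subsetD)
    ultimately show ?thesis
      using H_props(5) by blast
  qed
  show "r \<odot>\<^bsub>M\<^esub> y \<in> (\<lambda>x. c \<odot>\<^bsub>M\<^esub> x) ` H"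
    if r: "r \<in> carrier R" and y: "y \<in> (\<lambda>x. c \<odot>\<^bsub>M\<^esub> x) ` H" for r y
  proof -
    obtain u where "u \<in> H" "y = c \<odot>\<^bsub>M\<^esub> u"
      using y by blast
    moreover have "r \<odot>\<^bsub>M\<^esub> y = c \<odot>\<^bsub>M\<^esub> (r \<odot>\<^bsub>M\<^esub> u)"
      using calculation H_props(1) c r by (simp add: smult_smult_comm subsetD)
    ultimately show ?thesis
      using H_props(4) r by blast
  qed
qed

lemma aGamma_submodule: "a \<in> carrier R \<Longrightarrow> submodule (aGamma R M a) R M"
  unfolding aGamma_def by (intro smult_image_submodule Gamma_submodule)

lemma quot_module_smult_rcos:
  assumes N: "submodule N R M" and r: "r \<in> carrier R" and x: "x \<in> carrier M"
  shows "module.smult (quot_module R M N) r (N +>\<^bsub>M\<^esub> x) = N +>\<^bsub>M\<^esub> (r \<odot>\<^bsub>M\<^esub> x)"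
proof -
  have N_sub: "abelian_subgroup N M"
    using N by (rule submodule_abelian_subgroup)
  have N_carrier: "N \<subseteq> carrier M"
    using submoduleE(1)[OF N] .
  have rep_independent:
    "N +>\<^bsub>M\<^esub> (r \<odot>\<^bsub>M\<^esub> y) = N +>\<^bsub>M\<^esub> (r \<odot>\<^bsub>M\<^esub> x)" if y: "y \<in> N +>\<^bsub>M\<^esub> x" for y
  proof -
    obtain n where n: "n \<in> N" "y = n \<oplus>\<^bsub>M\<^esub> x"
      using y unfolding a_r_coset_def' by auto
    then have "r \<odot>\<^bsub>M\<^esub> y = r \<odot>\<^bsub>M\<^esub> n \<oplus>\<^bsub>M\<^esub> r \<odot>\<^bsub>M\<^esub> x"
      using N_carrier r x by (simp add: smult_r_distr subsetD)
    moreover have "r \<odot>\<^bsub>M\<^esub> n \<in> N"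
      using submoduleE(4)[OF N r n(1)] .
    ultimately have "r \<odot>\<^bsub>M\<^esub> y \<in> N +>\<^bsub>M\<^esub> (r \<odot>\<^bsub>M\<^esub> x)"
      using a_rcosI[OF _ N_carrier] r x by simp
    then show ?thesis
      using abelian_subgroup.a_repr_independence'[OF N_sub] r x by simp
  qed
  have "module.smult (quot_module R M N) r (N +>\<^bsub>M\<^esub> x)
      = (\<Union>y\<in>N +>\<^bsub>M\<^esub> x. N +>\<^bsub>M\<^esub> (r \<odot>\<^bsub>M\<^esub> y))"
    by (simp add: quot_module_def)
  also have "\<dots> = (\<Union>y\<in>N +>\<^bsub>M\<^esub> x. N +>\<^bsub>M\<^esub> (r \<odot>\<^bsub>M\<^esub> x))"
    using rep_independent by (rule SUP_cong[OF refl])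
  also have "\<dots> = N +>\<^bsub>M\<^esub> (r \<odot>\<^bsub>M\<^esub> x)"
    using abelian_subgroup.a_rcos_self[OF N_sub x] by (simp only: UN_constant) auto
  finally show ?thesis .
qed

lemma pow_smult_in_aGamma_imp_Gamma:
  fixes k :: nat
  assumes a: "a \<in> carrier R" and x: "x \<in> carrier M"
    and ax: "(a [^] k) \<odot>\<^bsub>M\<^esub> x \<in> aGamma R M a"
  shows "x \<in> Gamma R M a"
proof -
  obtain y and m :: nat where y: "y \<in> carrier M" "(a [^] k) \<odot>\<^bsub>M\<^esub> x = a \<odot>\<^bsub>M\<^esub> y"
    and m: "m > 0" "(a [^] m) \<odot>\<^bsub>M\<^esub> y = \<zero>\<^bsub>M\<^esub>"
    using ax unfolding aGamma_def Gamma_def by blast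
  have "(a [^] (m + k)) \<odot>\<^bsub>M\<^esub> x = (a [^] m) \<odot>\<^bsub>M\<^esub> (a \<odot>\<^bsub>M\<^esub> y)"
    using a x by (simp add: R.nat_pow_mult[symmetric] smult_assoc1 y(2))
  also have "\<dots> = \<zero>\<^bsub>M\<^esub>"
    using a y m by (simp add: smult_smult_comm)
  finally show ?thesis
    using x m unfolding Gamma_def by (auto intro!: exI[of _ "m + k"])
qed

lemma quot_module_zero_in_Gamma:
  assumes N: "submodule N R M" and a: "a \<in> carrier R"
  shows "N \<in> Gamma R (quot_module R M N) a"
proof -
  have "N \<in> a_rcosets\<^bsub>M\<^esub> N"
    using a_rcosetsI[OF submoduleE(1)[OF N] M.zero_closed] by (simp add: submodule_rcos_zero[OF N])
  moreover have "module.smult (quot_module R M N) (a [^] (1::nat)) N = N"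
    using quot_module_smult_rcos[OF N _ M.zero_closed, of "a [^] (1::nat)"] a
    by (simp add: submodule_rcos_zero[OF N])
  ultimately show ?thesis
    unfolding Gamma_def by (auto intro!: exI[of _ "1::nat"])
qed

lemma smult_Gamma_quot_aGamma:
  assumes a: "a \<in> carrier R" and S: "S \<in> Gamma R (quot_module R M (aGamma R M a)) a"
  shows "module.smult (quot_module R M (aGamma R M a)) a S = aGamma R M a"
proof -
  let ?N = "aGamma R M a" and ?Q = "quot_module R M (aGamma R M a)"
  have N: "submodule ?N R M"
    using a by (rule aGamma_submodule)
  have N_sub: "abelian_subgroup ?N M"
    using N by (rule submodule_abelian_subgroup)
  obtain k :: nat where "S \<in> a_rcosets\<^bsub>M\<^esub> ?N" and k: "module.smult ?Q (a [^] k) S = ?N"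
    using S unfolding Gamma_def by auto
  then obtain x where x: "x \<in> carrier M" "S = ?N +>\<^bsub>M\<^esub> x"
    unfolding A_RCOSETS_def' by blast
  have "?N +>\<^bsub>M\<^esub> ((a [^] k) \<odot>\<^bsub>M\<^esub> x) = ?N"
    using k a x by (simp add: quot_module_smult_rcos[OF N])
  then have "(a [^] k) \<odot>\<^bsub>M\<^esub> x \<in> ?N"
    using abelian_subgroup.a_rcos_self[OF N_sub, of "(a [^] k) \<odot>\<^bsub>M\<^esub> x"] a x by simp
  then have "a \<odot>\<^bsub>M\<^esub> x \<in> ?N"
    using a x pow_smult_in_aGamma_imp_Gamma unfolding aGamma_def by blast
  then show ?thesis
    using a x by (simp add: quot_module_smult_rcos[OF N] abelian_subgroup.a_rcos_const[OF N_sub])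
qed

end

theorem mainTheorem5:
  fixes R :: "('a, 'c) ring_scheme" and M :: "('a, 'b, 'd) module_scheme"
  assumes "cring R" and "module R M" and "a \<in> carrier R"
  shows "aGamma R (quot_module R M (aGamma R M a)) a
           = {\<zero>\<^bsub>quot_module R M (aGamma R M a)\<^esub>}"
proof -
  interpret module R M by fact
  have "aGamma R M a \<in> Gamma R (quot_module R M (aGamma R M a)) a"
    using assms(3) by (intro quot_module_zero_in_Gamma aGamma_submodule)
  then show ?thesis
    unfolding aGamma_def[of R "quot_module R M (aGamma R M a)" a]
    using smult_Gamma_quot_aGamma[OF assms(3)] by auto
qed

end
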